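(* Let $\boldsymbol{H}\in\mathbb{R}^{n\times m}$ with $\boldsymbol{H}\neq 0$, $\boldsymbol{x}\in\mathbb{R}^n$, and $\mathcal{E}(\boldsymbol{y})=\|\boldsymbol{x}-\boldsymbol{H}\boldsymbol{y}\|_2^2$ for $\boldsymbol{y}\in\mathbb{R}^m$. Let $\boldsymbol{y}^{t-1}\in\mathbb{R}^m$ be a nonzero vector with nonnegative entries, and set $\kappa=\|\boldsymbol{y}^{t-1}\|_\infty$. Suppose $\alpha$ satisfies $$0\le\alpha\le \frac{2}{\kappa\|\boldsymbol{H}\|_2^2}-1,$$ where $\|\boldsymbol{H}\|_2$ is the spectral norm. Define $$\boldsymbol{y}^t=\boldsymbol{y}^{t-1}\odot SSO_\alpha\big(\nabla\mathcal{E}(\boldsymbol{y}^{t-1})\big).$$ Then $\mathcal{E}(\boldsymbol{y}^t)\le\mathcal{E}(\boldsymbol{y}^{t-1})$.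
   Context: $\sigma(c)=\frac{1}{1+e^{-c}}$ denotes the logistic sigmoid. The Sliding Sigmoid Operator with sliding parameter $\alpha\in\mathbb{R}$ is the function $SSO_\alpha:\mathbb{R}\to\mathbb{R}$, $SSO_\alpha(z)=2\sigma(-z-\alpha)+2\sigma(\alpha)-1$; applied to a vector it acts entrywise. $\odot$ denotes the entrywise (Hadamard) product. Here $\nabla\mathcal{E}(\boldsymbol{y})=2\boldsymbol{H}^\top(\boldsymbol{H}\boldsymbol{y}-\boldsymbol{x})$. *)

theory Defs
  imports "HOL-Analysis.Analysis"
begin

definition sigmoid :: "real \<Rightarrow> real" where
  "sigmoid c = 1 / (1 + exp (- c))"

definition SSO :: "real \<Rightarrow> real \<Rightarrow> real" where
  "SSO \<alpha> z = 2 * sigmoid (- z - \<alpha>) + 2 * sigmoid \<alpha> - 1"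

definition SSO_vec :: "real \<Rightarrow> real ^ 'm \<Rightarrow> real ^ 'm" where
  "SSO_vec \<alpha> z = (\<chi> i. SSO \<alpha> (z $ i))"

definition hadamard :: "real ^ 'm \<Rightarrow> real ^ 'm \<Rightarrow> real ^ 'm" where
  "hadamard u v = (\<chi> i. u $ i * v $ i)"

definition spectral_norm :: "real ^ 'm ^ 'n \<Rightarrow> real" where
  "spectral_norm H = onorm (\<lambda>v. H *v v)"

definition inf_norm :: "real ^ 'm \<Rightarrow> real" where
  "inf_norm y = Max (range (\<lambda>i. \<bar>y $ i\<bar>))"

definition energy :: "real ^ 'm ^ 'n \<Rightarrow> real ^ 'n \<Rightarrow> real ^ 'm \<Rightarrow> real" where
  "energy H x y = (norm (x - H *v y))\<^sup>2"

definition grad_energy :: "real ^ 'm ^ 'n \<Rightarrow> real ^ 'n \<Rightarrow> real ^ 'm \<Rightarrow> real ^ 'm" where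
  "grad_energy H x y = 2 *\<^sub>R (transpose H *v (H *v y - x))"

end

(*
  Write the update as y + d with d_i = - y_i q_i, where g is the gradient at y and
  q_i = 1 - SSO_alpha(g_i) = 2 (sigmoid(-alpha) - sigmoid(-g_i - alpha)).  Because the energy is
  quadratic, E(y + d) <= E(y) + g . d + |H|^2 |d|^2.  The sigmoid is increasing and
  1/4-Lipschitz, so q_i lies between 0 and g_i / 2, i.e. 2 q_i^2 <= g_i q_i.  With
  y_i |H|^2 <= kappa |H|^2 <= 2 every coordinate contributes y_i (|H|^2 y_i q_i^2 - g_i q_i) <= 0.
  The conditions on alpha matter only because together they force kappa |H|^2 <= 2.
*)
theory Submission
  imports Defs
begin

lemma one_plus_exp_pos: "0 < 1 + exp (x :: real)"
  by (simp add: add_pos_pos)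

lemma sigmoid_has_real_derivative:
  "(sigmoid has_real_derivative exp (- t) / (1 + exp (- t))\<^sup>2) (at t)"
  unfolding sigmoid_def using one_plus_exp_pos [of "- t"]
  by (auto intro!: derivative_eq_intros simp: power2_eq_square field_simps)

lemma sigmoid_derivative_le:
  fixes t :: real
  shows "exp (- t) / (1 + exp (- t))\<^sup>2 \<le> 1 / 4"
proof -
  have "4 * exp (- t) \<le> (1 + exp (- t))\<^sup>2"
    using zero_le_power2 [of "1 - exp (- t)"] by (simp add: power2_eq_square algebra_simps)
  then show ?thesis
    using one_plus_exp_pos [of "- t"] by (simp add: divide_le_eq)
qed

lemma sigmoid_mono: "a \<le> b \<Longrightarrow> sigmoid a \<le> sigmoid b"
proof (rule DERIV_nonneg_imp_nondecreasing [where f = sigmoid])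
  fix t :: real
  show "\<exists>D. (sigmoid has_real_derivative D) (at t) \<and> 0 \<le> D"
    using sigmoid_has_real_derivative [of t] divide_nonneg_nonneg [OF exp_ge_zero zero_le_power2]
    by blast
qed

lemma sigmoid_diff_le: "a \<le> b \<Longrightarrow> sigmoid b - sigmoid a \<le> (b - a) / 4"
proof -
  assume "a \<le> b"
  have "a / 4 - sigmoid a \<le> b / 4 - sigmoid b"
  proof (rule DERIV_nonneg_imp_nondecreasing [where f = "\<lambda>t. t / 4 - sigmoid t"])
    fix t
    have "((\<lambda>t. t / 4 - sigmoid t) has_real_derivative 1 / 4 - exp (- t) / (1 + exp (- t))\<^sup>2) (at t)"
      by (auto intro!: derivative_eq_intros sigmoid_has_real_derivative)
    then show "\<exists>D. ((\<lambda>t. t / 4 - sigmoid t) has_real_derivative D) (at t) \<and> 0 \<le> D"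
      using sigmoid_derivative_le [of t] by auto
  qed fact
  then show ?thesis
    by simp
qed

lemma sigmoid_minus: "sigmoid (- a) = 1 - sigmoid a"
proof -
  have "exp (- a) * exp a = 1"
    by (simp add: exp_minus)
  then show ?thesis
    unfolding sigmoid_def using one_plus_exp_pos [of a] one_plus_exp_pos [of "- a"]
    by (simp add: field_simps)
qed

lemma one_minus_SSO: "1 - SSO \<alpha> z = 2 * (sigmoid (- \<alpha>) - sigmoid (- z - \<alpha>))"
  unfolding SSO_def sigmoid_minus [of \<alpha>] by simp

lemma SSO_gap_sq_le: "2 * (1 - SSO \<alpha> z)\<^sup>2 \<le> z * (1 - SSO \<alpha> z)"
proof (cases "0 \<le> z")
  case True
  then have "0 \<le> 1 - SSO \<alpha> z" "1 - SSO \<alpha> z \<le> z / 2"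
    using sigmoid_mono [of "- z - \<alpha>" "- \<alpha>"] sigmoid_diff_le [of "- z - \<alpha>" "- \<alpha>"]
    by (simp_all add: one_minus_SSO)
  from mult_right_mono [OF this(2,1)] show ?thesis
    by (simp add: power2_eq_square)
next
  case False
  then have "z / 2 \<le> 1 - SSO \<alpha> z" "1 - SSO \<alpha> z \<le> 0"
    using sigmoid_mono [of "- \<alpha>" "- z - \<alpha>"] sigmoid_diff_le [of "- \<alpha>" "- z - \<alpha>"]
    by (simp_all add: one_minus_SSO)
  from mult_right_mono_neg [OF this] show ?thesis
    by (simp add: power2_eq_square)
qed

lemma energy_add:
  "energy H x (y + d) = energy H x y + grad_energy H x y \<bullet> d + (norm (H *v d))\<^sup>2"
proof -
  define r where "r = x - H *v y"
  have "grad_energy H x y \<bullet> d = - 2 * (r \<bullet> (H *v d))"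
    by (simp add: grad_energy_def r_def dot_lmul_matrix inner_diff_left)
  moreover have "energy H x (y + d) = (norm (r - H *v d))\<^sup>2"
    by (simp add: energy_def r_def matrix_vector_right_distrib algebra_simps)
  ultimately show ?thesis
    by (simp add: energy_def r_def power2_norm_eq_inner inner_diff_left inner_diff_right inner_commute)
qed

lemma norm_matrix_vector_le_spectral_norm: "norm (H *v v) \<le> spectral_norm H * norm v"
  unfolding spectral_norm_def by (rule onorm [OF matrix_vector_mul_bounded_linear])

lemma energy_add_le:
  "energy H x (y + d) \<le> energy H x y + grad_energy H x y \<bullet> d + (spectral_norm H)\<^sup>2 * (norm d)\<^sup>2"
proof -
  have "(norm (H *v d))\<^sup>2 \<le> (spectral_norm H * norm d)\<^sup>2"
    by (rule power_mono [OF norm_matrix_vector_le_spectral_norm norm_ge_zero])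
  then show ?thesis
    by (simp add: energy_add power_mult_distrib)
qed

lemma abs_le_inf_norm: "\<bar>y $ i\<bar> \<le> inf_norm y"
  unfolding inf_norm_def by (rule Max_ge) auto

lemma SSO_step_energy_le:
  fixes H :: "real ^ 'm ^ 'n" and y :: "real ^ 'm"
  assumes nonneg: "\<forall>i. 0 \<le> y $ i"
    and step_size: "inf_norm y * (spectral_norm H)\<^sup>2 \<le> 2"
  shows "energy H x (hadamard y (SSO_vec \<alpha> (grad_energy H x y))) \<le> energy H x y"
proof -
  define g where "g = grad_energy H x y"
  define L where "L = (spectral_norm H)\<^sup>2"
  define d where "d = hadamard y (SSO_vec \<alpha> g) - y"
  have componentwise: "L * (d $ i)\<^sup>2 + g $ i * d $ i \<le> 0" for i
  proof -
    define p where "p = 1 - SSO \<alpha> (g $ i)"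
    have d_i: "d $ i = - (y $ i * p)"
      by (simp add: d_def hadamard_def SSO_vec_def p_def algebra_simps)
    have "y $ i * L \<le> 2"
      using step_size abs_le_inf_norm [of y i] nonneg mult_right_mono [of _ _ L]
      by (fastforce simp: L_def)
    then have "y $ i * L * p\<^sup>2 \<le> g $ i * p"
      using SSO_gap_sq_le [of \<alpha> "g $ i"] mult_right_mono [of _ 2 "p\<^sup>2"]
      by (fastforce simp: p_def)
    then have "y $ i * (y $ i * L * p\<^sup>2 - g $ i * p) \<le> 0"
      using nonneg by (simp add: mult_nonneg_nonpos)
    then show ?thesis
      by (simp add: d_i power2_eq_square algebra_simps)
  qed
  have "(norm d)\<^sup>2 = (\<Sum>i\<in>UNIV. (d $ i)\<^sup>2)"
    unfolding power2_norm_eq_inner by (simp add: inner_vec_def power2_eq_square)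
  then have "L * (norm d)\<^sup>2 + g \<bullet> d = (\<Sum>i\<in>UNIV. L * (d $ i)\<^sup>2 + g $ i * d $ i)"
    by (simp add: inner_vec_def sum.distrib sum_distrib_left)
  also have "\<dots> \<le> 0"
    by (rule sum_nonpos) (use componentwise in auto)
  finally have "energy H x (y + d) \<le> energy H x y"
    using energy_add_le [of H x y d] by (simp add: g_def L_def)
  then show ?thesis
    by (simp add: d_def g_def)
qed

theorem theorem2:
  fixes H :: "real ^ 'm ^ 'n" and x :: "real ^ 'n" and y :: "real ^ 'm" and \<alpha> :: real
  assumes "H \<noteq> 0"
    and "y \<noteq> 0"
    and "\<forall>i. y $ i \<ge> 0"
    and "0 \<le> \<alpha>"
    and "\<alpha> \<le> 2 / (inf_norm y * (spectral_norm H)\<^sup>2) - 1"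
  shows "energy H x (hadamard y (SSO_vec \<alpha> (grad_energy H x y))) \<le> energy H x y"
proof (rule SSO_step_energy_le)
  show "\<forall>i. 0 \<le> y $ i"
    using assms(3) by simp
  show "inf_norm y * (spectral_norm H)\<^sup>2 \<le> 2"
  proof (cases "inf_norm y * (spectral_norm H)\<^sup>2 > 0")
    case True
    have "1 \<le> 2 / (inf_norm y * (spectral_norm H)\<^sup>2)"
      using assms(4,5) by linarith
    with True show ?thesis
      by (simp add: le_divide_eq)
  qed simp
qed

end
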